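(* Let $k\ge 2$ and let $\overline{x}_1,\dots,\overline{x}_p\in\Sigma_k^*$ form a $p$-cycle of $\mathcal P_k$, i.e. $\overline{x}_{i}=\mathcal P_k(\overline{x}_{i-1})$ for $i=1,\dots,p$, with indices taken modulo $p$ (so $\overline{x}_0=\overline{x}_p$). For each $i$, let $b_{1,i}>\dots>b_{r_i,i}$ be the letters occurring in $\overline{x}_{i-1}$, and let $n_{(j,i)}=\lfloor\log_k |\overline{x}_{i-1}|_{b_{j,i}}\rfloor$, so that $\overline{x}_i=A_{1,i}b_{1,i}\cdots A_{r_i,i}b_{r_i,i}$ with $A_{j,i}=[|\overline{x}_{i-1}|_{b_{j,i}}]_k$ a word of length $n_{(j,i)}+1$ with nonzero first letter. Then \[\sum_{i=1}^{p}\sum_{j=1}^{r_i} n_{(j,i)}\;\ge\;\sum_{i=1}^{p}\sum_{j=1}^{r_i}k^{n_{(j,i)}}-2\sum_{i=1}^{p} r_i .\] (In particular, if all $r_i$ equal a common value $r$, the right-hand side is $\sum_{i,j}k^{n_{(j,i)}}-2pr$.)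
   Context: Fix an integer $k\ge 2$ and the alphabet $\Sigma_k=\{0,1,\dots,k-1\}$. A word is a finite nonempty string of letters of $\Sigma_k$ (leading zeros allowed); $\Sigma_k^*$ denotes the set of words. For a word $x$, $|x|$ denotes its length and $|x|_i$ the number of occurrences of the letter $i$ in $x$. For a positive integer $c$, $[c]_k$ denotes its standard base-$k$ representation without leading zeros, viewed as a word over $\Sigma_k$; it has $\lfloor\log_k c\rfloor+1$ letters. The map $\mathcal P_k:\Sigma_k^*\to\Sigma_k^*$ is defined as follows: if $b_1>b_2>\dots>b_r$ are exactly the letters occurring in $x$ (i.e. those with $|x|_{b_j}\neq 0$), then $\mathcal P_k(x)=[|x|_{b_1}]_k\,b_1\,[|x|_{b_2}]_k\,b_2\cdots[|x|_{b_r}]_k\,b_r$ (concatenation). A $p$-cycle is a list of words $\overline x_1,\dots,\overline x_p$ with $\mathcal P_k(\overline x_{i})=\overline x_{i+1}$ for $1\le i<p$ and $\mathcal P_k(\overline x_p)=\overline x_1$. *)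

theory Defs
  imports Main
begin

(* Standard base-k representation [c]_k of a positive integer c, most significant digit first,
   no leading zeros. [0]_k is the empty list (never used by P_k). *)
fun base_digits :: "nat \<Rightarrow> nat \<Rightarrow> nat list" where
  "base_digits k c = (if c = 0 \<or> k < 2 then [] else base_digits k (c div k) @ [c mod k])"

declare base_digits.simps[simp del]

definition is_word :: "nat \<Rightarrow> nat list \<Rightarrow> bool" where
  "is_word k x \<longleftrightarrow> x \<noteq> [] \<and> (\<forall>a\<in>set x. a < k)"

definition occ :: "nat list \<Rightarrow> nat \<Rightarrow> nat" where
  "occ x b = count_list x b"

definition letters_desc :: "nat list \<Rightarrow> nat list" where
  "letters_desc x = rev (sorted_list_of_set (set x))"

definition Pk :: "nat \<Rightarrow> nat list \<Rightarrow> nat list" where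
  "Pk k x = concat (map (\<lambda>b. base_digits k (occ x b) @ [b]) (letters_desc x))"

(* floor(log_k c) for c >= 1, i.e. length of [c]_k minus one *)
definition floorlog_k :: "nat \<Rightarrow> nat \<Rightarrow> nat" where
  "floorlog_k k c = length (base_digits k c) - 1"

end

theory Submission
  imports Defs
begin

text \<open>Each block \<open>[|x|\<^sub>b]\<^sub>k b\<close> of \<open>P\<^sub>k(x)\<close> has length \<open>\<lfloor>log\<^sub>k |x|\<^sub>b\<rfloor> + 2\<close>, so summing
  the lengths of the words around the cycle gives \<open>\<Sum> n\<^sub>j\<^sub>,\<^sub>i + 2 \<Sum> r\<^sub>i = \<Sum> |x\<^sub>i|\<close>.
  On the other hand \<open>|x| = \<Sum>\<^sub>b |x|\<^sub>b \<ge> \<Sum>\<^sub>b k\<^bsup>\<lfloor>log\<^sub>k |x|\<^sub>b\<rfloor>\<^esup>\<close>.\<close>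

lemma base_digits_nonempty: "k \<ge> 2 \<Longrightarrow> c > 0 \<Longrightarrow> base_digits k c \<noteq> []"
  by (subst base_digits.simps) simp

lemma power_floorlog_k_le:
  assumes "k \<ge> 2" and "c > 0"
  shows "k ^ floorlog_k k c \<le> c"
  using assms unfolding floorlog_k_def
proof (induction k c rule: base_digits.induct)
  case (1 k c)
  have digits: "base_digits k c = base_digits k (c div k) @ [c mod k]"
    using "1.prems" by (subst base_digits.simps) simp
  show ?case
  proof (cases "c div k = 0")
    case True
    then show ?thesis using digits "1.prems" by (simp add: base_digits.simps)
  next
    case False
    have IH: "k ^ (length (base_digits k (c div k)) - 1) \<le> c div k"
      using "1.IH" "1.prems" False by simp
    have "length (base_digits k c) - 1 = Suc (length (base_digits k (c div k)) - 1)"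
      using digits base_digits_nonempty[of k "c div k"] "1.prems" False by simp
    then have "k ^ (length (base_digits k c) - 1) = k * k ^ (length (base_digits k (c div k)) - 1)"
      by simp
    also have "\<dots> \<le> k * (c div k)" using IH by (rule mult_le_mono2)
    also have "\<dots> \<le> c" by (rule times_div_less_eq_dividend)
    finally show ?thesis .
  qed
qed

lemma occ_pos_iff: "occ x b > 0 \<longleftrightarrow> b \<in> set x"
  unfolding occ_def using count_list_0_iff[of x b] by linarith

lemma sum_occ_eq_length: "(\<Sum>b\<in>set x. occ x b) = length x"
  unfolding occ_def by (rule sum_count_set) auto

lemma length_Pk:
  assumes "k \<ge> 2"
  shows "length (Pk k x) = (\<Sum>b\<in>set x. floorlog_k k (occ x b)) + 2 * card (set x)"
proof -
  have "length (Pk k x) = (\<Sum>b\<leftarrow>letters_desc x. length (base_digits k (occ x b)) + 1)"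
    by (simp add: Pk_def length_concat comp_def)
  also have "\<dots> = (\<Sum>b\<in>set x. length (base_digits k (occ x b)) + 1)"
    by (simp add: letters_desc_def sum_list_distinct_conv_sum_set)
  also have "\<dots> = (\<Sum>b\<in>set x. floorlog_k k (occ x b) + 2)"
  proof (rule sum.cong[OF refl])
    fix b assume "b \<in> set x"
    then have "base_digits k (occ x b) \<noteq> []"
      using assms occ_pos_iff base_digits_nonempty by blast
    then show "length (base_digits k (occ x b)) + 1 = floorlog_k k (occ x b) + 2"
      unfolding floorlog_k_def by (cases "base_digits k (occ x b)") auto
  qed
  also have "\<dots> = (\<Sum>b\<in>set x. floorlog_k k (occ x b)) + 2 * card (set x)"
    by (simp only: sum.distrib) simp
  finally show ?thesis .
qed

lemma sum_power_floorlog_k_le_length: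
  assumes "k \<ge> 2"
  shows "(\<Sum>b\<in>set x. k ^ floorlog_k k (occ x b)) \<le> length x"
proof -
  have "(\<Sum>b\<in>set x. k ^ floorlog_k k (occ x b)) \<le> (\<Sum>b\<in>set x. occ x b)"
    using assms occ_pos_iff power_floorlog_k_le by (blast intro: sum_mono)
  then show ?thesis by (simp only: sum_occ_eq_length)
qed

lemma sum_lessThan_rotate:
  fixes f :: "nat \<Rightarrow> 'a::comm_monoid_add"
  assumes "p \<ge> 1"
  shows "(\<Sum>i<p. f (Suc i mod p)) = (\<Sum>i<p. f i)"
proof -
  obtain m where p: "p = Suc m" using assms by (cases p) auto
  have "(\<Sum>i<Suc m. f (Suc i mod Suc m)) = (\<Sum>i<m. f (Suc i)) + f 0"
    by (simp add: sum.cong[of "{..<m}" _ "\<lambda>i. f (Suc i mod Suc m)"])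
  also have "\<dots> = (\<Sum>i<Suc m. f i)"
    using sum.lessThan_Suc_shift[of f m] by (simp add: add.commute)
  finally show ?thesis using p by simp
qed

lemma sum_length_Pk_cycle:
  assumes "p \<ge> 1" and "\<And>i. i < p \<Longrightarrow> Pk k (x i) = x (Suc i mod p)"
  shows "(\<Sum>i<p. length (Pk k (x i))) = (\<Sum>i<p. length (x i))"
  using assms sum_lessThan_rotate[of p "\<lambda>i. length (x i)"] by simp

theorem theorem3:
  fixes k p :: nat and x :: "nat \<Rightarrow> nat list"
  assumes "k \<ge> 2" and "p \<ge> 1"
    and "\<And>i. i < p \<Longrightarrow> is_word k (x i)"
    and "\<And>i. i < p \<Longrightarrow> Pk k (x i) = x (Suc i mod p)"
  shows "(\<Sum>i<p. \<Sum>b\<in>set (x i). int (floorlog_k k (occ (x i) b)))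
    \<ge> (\<Sum>i<p. \<Sum>b\<in>set (x i). int k ^ floorlog_k k (occ (x i) b))
       - 2 * (\<Sum>i<p. int (card (set (x i))))"
proof -
  have "(\<Sum>i<p. \<Sum>b\<in>set (x i). k ^ floorlog_k k (occ (x i) b)) \<le> (\<Sum>i<p. length (x i))"
    using sum_power_floorlog_k_le_length[OF assms(1)] by (rule sum_mono)
  also have "\<dots> = (\<Sum>i<p. length (Pk k (x i)))"
    using sum_length_Pk_cycle[of p k x] assms(2,4) by simp
  also have "\<dots> = (\<Sum>i<p. \<Sum>b\<in>set (x i). floorlog_k k (occ (x i) b))
      + 2 * (\<Sum>i<p. card (set (x i)))"
    by (simp add: length_Pk[OF assms(1)] sum.distrib sum_distrib_left)
  finally have "int (\<Sum>i<p. \<Sum>b\<in>set (x i). k ^ floorlog_k k (occ (x i) b))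
      \<le> int ((\<Sum>i<p. \<Sum>b\<in>set (x i). floorlog_k k (occ (x i) b))
        + 2 * (\<Sum>i<p. card (set (x i))))"
    by (rule of_nat_mono)
  then show ?thesis by (simp add: of_nat_sum)
qed

end
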